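(* Let $1\le\tau_1<\dots<\tau_m$ be thresholds, $P,Q$ two candidates, and $Z^*$ a point of the metric space minimizing $SC$. If $P$ beats $Q$ under Weighted Majority Rule 4 and $\delta_I=SC(P)/SC(Q)>\tau_m$, then $SC(P)/SC(Z^* )\le\frac{2\delta_I}{\delta_I-\tau_m}$.
   Context: Voters $N$ and candidates are points of an arbitrary metric space $(X,d)$; $SC(Y)=\sum_{i\in N}d(i,Y)$ for $Y\in X$. Set $\tau_0=1/\tau_1$, $\tau_{m+1}=\infty$, $\delta=\max_{0\le l\le m}\frac{\tau_l\tau_{l+1}+2\tau_{l+1}-1}{\tau_l\tau_{l+1}+1}$ (the $l=m$ term meaning $(\tau_m+2)/\tau_m$), and $k\in\{1,\dots,m\}$ with $\tau_k\le\delta<\tau_{k+1}$; $\frac{\tau_{m+1}-\delta}{\tau_{m+1}-1}:=1$. Preference strength of $i$ for $P$ over $Q$ is $\alpha_i^{PQ}=d(i,Q)/d(i,P)$ when $d(i,P)\le d(i,Q)$. $A_l=\{i: d(i,P)\le d(i,Q),\ \tau_l\le\alpha_i^{PQ}<\tau_{l+1}\}$, $B_l=\{j: d(j,Q)\le d(j,P),\ \tau_l\le\alpha_j^{QP}<\tau_{l+1}\}$, $C$ the remaining voters. Weighted Majority Rule 4: for $l<k$ voters in $A_l\cup B_l$ get weight $\frac{(\delta+1)(\tau_l\tau_{l+1}-1)}{(\tau_l+1)(\tau_{l+1}+1)}$; for $l\ge k$ they get weight $\frac{\tau_{l+1}-\delta}{\tau_{l+1}-1}+\frac{\delta\tau_l-1}{\tau_l+1}$;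 voters in $C$ get weight $0$; $P$ beats $Q$ iff the total weight of $\bigcup_lA_l$ is at least that of $\bigcup_lB_l$. *)

theory Defs
  imports "HOL-Analysis.Analysis"
begin

text \<open>Thresholds are given as tau 1, ..., tau m.  The extended thresholds
  tau_0 = 1 / tau_1 and tau_l for 1 <= l <= m; tau_(m+1) = infinity is handled
  separately wherever it occurs.\<close>
definition thr :: "(nat \<Rightarrow> real) \<Rightarrow> nat \<Rightarrow> real" where
  "thr tau l = (if l = 0 then 1 / tau 1 else tau l)"

definition delta_term :: "(nat \<Rightarrow> real) \<Rightarrow> nat \<Rightarrow> nat \<Rightarrow> real" where
  "delta_term tau m l =
     (if l = m then (tau m + 2) / tau m
      else (thr tau l * thr tau (Suc l) + 2 * thr tau (Suc l) - 1)
           / (thr tau l * thr tau (Suc l) + 1))"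

definition wmr_delta :: "(nat \<Rightarrow> real) \<Rightarrow> nat \<Rightarrow> real" where
  "wmr_delta tau m = Max (delta_term tau m ` {0..m})"

definition wmr_k :: "(nat \<Rightarrow> real) \<Rightarrow> nat \<Rightarrow> nat" where
  "wmr_k tau m = (THE k. k \<in> {1..m} \<and> tau k \<le> wmr_delta tau m
                       \<and> (k = m \<or> wmr_delta tau m < tau (Suc k)))"

definition wmr_weight :: "(nat \<Rightarrow> real) \<Rightarrow> nat \<Rightarrow> nat \<Rightarrow> real" where
  "wmr_weight tau m l =
     (let \<delta> = wmr_delta tau m; a = thr tau l; b = thr tau (Suc l) in
      if l < wmr_k tau m then (\<delta> + 1) * (a * b - 1) / ((a + 1) * (b + 1))
      else (if l = m then 1 else (b - \<delta>) / (b - 1)) + (\<delta> * a - 1) / (a + 1))"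

text \<open>A voter at distance dP from P and dQ from Q with dP <= dQ has preference
  strength alpha = dQ / dP for P over Q; band l means tau_l <= alpha < tau_(l+1).
  Written multiplicatively (alpha = infinity when dP = 0, falling in the top band).\<close>
definition in_band :: "(nat \<Rightarrow> real) \<Rightarrow> nat \<Rightarrow> real \<Rightarrow> real \<Rightarrow> nat \<Rightarrow> bool" where
  "in_band tau m dP dQ l \<longleftrightarrow> dP \<le> dQ \<and> thr tau l * dP \<le> dQ
                               \<and> (l = m \<or> dQ < thr tau (Suc l) * dP)"

definition SC :: "'v set \<Rightarrow> ('v \<Rightarrow> 'a::metric_space) \<Rightarrow> 'a \<Rightarrow> real" where
  "SC N loc Y = (\<Sum>i\<in>N. dist (loc i) Y)"

definition setA :: "(nat \<Rightarrow> real) \<Rightarrow> nat \<Rightarrow> 'v set \<Rightarrow> ('v \<Rightarrow> 'a::metric_space) \<Rightarrow> 'a \<Rightarrow> 'a \<Rightarrow> nat \<Rightarrow> 'v set" where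
  "setA tau m N loc P Q l = {i \<in> N. in_band tau m (dist (loc i) P) (dist (loc i) Q) l}"

text \<open>P beats Q under WMR4: total weight of \<Union>A_l >= total weight of \<Union>B_l
  (the A_l are pairwise disjoint, as are the B_l); B_l = A_l with P, Q swapped.\<close>
definition wmr4_beats :: "(nat \<Rightarrow> real) \<Rightarrow> nat \<Rightarrow> 'v set \<Rightarrow> ('v \<Rightarrow> 'a::metric_space) \<Rightarrow> 'a \<Rightarrow> 'a \<Rightarrow> bool" where
  "wmr4_beats tau m N loc P Q \<longleftrightarrow>
     (\<Sum>l\<in>{0..m}. wmr_weight tau m l * real (card (setA tau m N loc P Q l)))
     \<ge> (\<Sum>l\<in>{0..m}. wmr_weight tau m l * real (card (setA tau m N loc Q P l)))"

end

theory Submission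
  imports Defs
begin

(* Under Weighted Majority Rule 4 the top band m carries the largest weight, so if P beats Q,
   the voters preferring Q to P by a factor of at least tau_m are no more numerous than the
   voters weakly preferring P.  Match the former injectively with the latter (outside their
   intersection).  For a matched pair (j, i) the triangle inequality gives
   d(j,P) - d(j,Q) <= 2 d(i,j) <= 2 (d(i,Z) + d(j,Z)) for any point Z, and every unmatched
   voter contributes nonpositively to SC(P) - tau_m SC(Q).  Hence
   SC(P) - tau_m SC(Q) <= 2 SC(Z), which rearranges to the claimed bound. *)

lemma dist_sub_dist_le_via_closer_point:
  fixes x y P Q Z :: "'a::metric_space"
  assumes "dist x P \<le> dist x Q"
  shows "dist y P - dist y Q \<le> 2 * (dist x Z + dist y Z)"
proof -
  have "dist y P \<le> dist x y + dist x Q"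
    using dist_triangle[of y P x] assms by (simp add: dist_commute)
  also have "\<dots> \<le> 2 * dist x y + dist y Q"
    using dist_triangle[of x Q y] by simp
  finally show ?thesis using dist_triangle[of x y Z] by (simp add: dist_commute)
qed

lemma sum_le_sum_by_pairing:
  fixes g h :: "'v \<Rightarrow> real"
  assumes "finite N" "D \<subseteq> N" "f ` D \<subseteq> N - D" "inj_on f D"
    and "\<And>i. i \<in> N - (D \<union> f ` D) \<Longrightarrow> g i \<le> 0"
    and "\<And>i. i \<in> N \<Longrightarrow> 0 \<le> h i"
    and "\<And>j. j \<in> D \<Longrightarrow> g j + g (f j) \<le> h j + h (f j)"
  shows "sum g N \<le> sum h N"
proof -
  have paired: "sum k (D \<union> f ` D) = (\<Sum>j\<in>D. k j + k (f j))" for k :: "'v \<Rightarrow> real"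
  proof -
    have "finite D" using assms(1,2) finite_subset by blast
    moreover have "D \<inter> f ` D = {}" using assms(3) by blast
    ultimately show ?thesis
      using assms(4) by (simp add: sum.union_disjoint sum.reindex sum.distrib)
  qed
  have sub: "D \<union> f ` D \<subseteq> N" using assms(2,3) by blast
  have "sum g N = sum g (D \<union> f ` D) + sum g (N - (D \<union> f ` D))"
    using sum.subset_diff[OF sub assms(1)] by (simp add: add.commute)
  also have "\<dots> \<le> sum g (D \<union> f ` D)"
    using sum_nonpos[of "N - (D \<union> f ` D)" g, OF assms(5)] by simp
  also have "\<dots> \<le> sum h (D \<union> f ` D)"
    unfolding paired using assms(7) by (rule sum_mono)
  also have "\<dots> \<le> sum h N"
    using assms(1,6) sub by (intro sum_mono2) auto
  finally show ?thesis .
qed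

lemma SC_sub_mult_le_twice_SC:
  fixes loc :: "'v \<Rightarrow> 'a::metric_space"
  assumes "finite N" "1 \<le> t"
    and card_le: "card {i \<in> N. t * dist (loc i) Q \<le> dist (loc i) P}
                  \<le> card {i \<in> N. dist (loc i) P \<le> dist (loc i) Q}"
  shows "SC N loc P - t * SC N loc Q \<le> 2 * SC N loc Z"
proof -
  define B where "B = {i \<in> N. t * dist (loc i) Q \<le> dist (loc i) P}"
  define A where "A = {i \<in> N. dist (loc i) P \<le> dist (loc i) Q}"
  have fin: "finite A" "finite B" using assms(1) by (simp_all add: A_def B_def)
  have card_diff: "card (B - A) \<le> card (A - B)"
    using card_le fin card_Diff_subset_Int[of B A] card_Diff_subset_Int[of A B] Int_commute[of A B]
    by (simp add: A_def[symmetric] B_def[symmetric])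
  obtain f where f: "f ` (B - A) \<subseteq> A - B" "inj_on f (B - A)"
    using card_le_inj[OF _ _ card_diff] fin by blast
  have Q_le: "dist (loc i) Q \<le> t * dist (loc i) Q" for i
    using assms(2) by (simp add: mult_le_cancel_right1)
  have "(\<Sum>i\<in>N. dist (loc i) P - t * dist (loc i) Q) \<le> (\<Sum>i\<in>N. 2 * dist (loc i) Z)"
  proof (rule sum_le_sum_by_pairing[OF assms(1) _ _ f(2)])
    show "B - A \<subseteq> N" "f ` (B - A) \<subseteq> N - (B - A)" using f(1) by (auto simp: A_def B_def)
  next
    fix i assume "i \<in> N - (B - A \<union> f ` (B - A))"
    then show "dist (loc i) P - t * dist (loc i) Q \<le> 0"
      using Q_le[of i] by (auto simp: A_def B_def)
  next
    fix j assume "j \<in> B - A"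
    then have fj: "dist (loc (f j)) P \<le> dist (loc (f j)) Q" using f(1) by (auto simp: A_def)
    have "dist (loc j) P - t * dist (loc j) Q \<le> dist (loc j) P - dist (loc j) Q"
      using Q_le[of j] by simp
    also have "\<dots> \<le> 2 * (dist (loc (f j)) Z + dist (loc j) Z)"
      using fj by (rule dist_sub_dist_le_via_closer_point)
    finally show "(dist (loc j) P - t * dist (loc j) Q) + (dist (loc (f j)) P - t * dist (loc (f j)) Q)
      \<le> 2 * dist (loc j) Z + 2 * dist (loc (f j)) Z"
      using fj Q_le[of "f j"] by simp
  qed auto
  then show ?thesis
    by (simp add: SC_def sum_subtractf sum_distrib_left)
qed

lemma ratio_le_of_sub_mult_le:
  fixes p q z t :: real
  assumes "0 \<le> q" "0 \<le> z" "0 \<le> t" "t < p / q" "p - t * q \<le> 2 * z"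
  shows "p / z \<le> 2 * (p / q) / (p / q - t)"
proof -
  define r where "r = p / q"
  have "0 < q" using assms(1,3,4) by (cases "q = 0") auto
  then have p_eq: "p = r * q" by (simp add: r_def)
  have "t < r" using assms(4) by (simp add: r_def)
  have "p / z \<le> 2 * r / (r - t)"
  proof (cases "z = 0")
    case False
    have "p * (r - t) = r * (p - t * q)" by (simp add: p_eq algebra_simps)
    also have "\<dots> \<le> r * (2 * z)" using assms(3,5) \<open>t < r\<close> by (intro mult_left_mono) auto
    finally show ?thesis using False assms(2) \<open>t < r\<close> by (simp add: divide_simps mult_ac)
  qed (use \<open>t < r\<close> assms(3) in simp)
  then show ?thesis by (simp add: r_def)
qed

lemma weighted_top_count_le_total:
  fixes w a b :: "nat \<Rightarrow> real"
  assumes "\<And>l. l \<le> m \<Longrightarrow> 0 \<le> w l" "\<And>l. l \<le> m \<Longrightarrow> w l \<le> w m" "0 < w m"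
    and "\<And>l. l \<le> m \<Longrightarrow> 0 \<le> a l" "\<And>l. l \<le> m \<Longrightarrow> 0 \<le> b l"
    and "(\<Sum>l\<in>{0..m}. w l * b l) \<le> (\<Sum>l\<in>{0..m}. w l * a l)"
  shows "b m \<le> (\<Sum>l\<in>{0..m}. a l)"
proof -
  have "w m * b m \<le> (\<Sum>l\<in>{0..m}. w l * b l)"
    using assms(1,5) by (intro member_le_sum) auto
  also have "\<dots> \<le> (\<Sum>l\<in>{0..m}. w l * a l)" by (rule assms(6))
  also have "\<dots> \<le> (\<Sum>l\<in>{0..m}. w m * a l)"
    using assms(2,4) by (intro sum_mono mult_right_mono) auto
  finally show ?thesis
    using assms(3) by (simp add: sum_distrib_left[symmetric])
qed

lemma unique_threshold_index:
  fixes tau :: "nat \<Rightarrow> real"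
  assumes "1 \<le> m" "\<And>i j. 1 \<le> i \<Longrightarrow> i < j \<Longrightarrow> j \<le> m \<Longrightarrow> tau i < tau j" "tau 1 \<le> d"
  shows "\<exists>!k. k \<in> {1..m} \<and> tau k \<le> d \<and> (k = m \<or> d < tau (Suc k))"
proof -
  let ?P = "\<lambda>k. k \<in> {1..m} \<and> tau k \<le> d \<and> (k = m \<or> d < tau (Suc k))"
  have no_lt: "\<not> i < j" if "i \<in> {1..m}" "i = m \<or> d < tau (Suc i)" "j \<in> {1..m}" "tau j \<le> d"
    for i j
  proof
    assume "i < j"
    then have "tau (Suc i) \<le> tau j"
      using that assms(2)[of "Suc i" j] by (cases "Suc i = j") auto
    then show False using that \<open>i < j\<close> by auto
  qed
  define k where "k = Max {j \<in> {1..m}. tau j \<le> d}"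
  have "k \<in> {j \<in> {1..m}. tau j \<le> d}"
    unfolding k_def using assms(1,3) by (intro Max_in) auto
  moreover have "d < tau (Suc k)" if "k \<noteq> m"
  proof (rule ccontr)
    assume "\<not> d < tau (Suc k)"
    then have "Suc k \<le> k"
      using \<open>k \<in> _\<close> that unfolding k_def by (intro Max_ge) auto
    then show False by simp
  qed
  ultimately have "?P k" by blast
  moreover have "j = k" if "?P j" for j
    using that \<open>?P k\<close> no_lt[of k j] no_lt[of j k] by auto
  ultimately show ?thesis by (rule ex1I)
qed

lemma low_weight_le:
  fixes \<delta> a b t :: real
  assumes "0 \<le> \<delta> + 1" "0 < a" "a \<le> t" "0 \<le> b"
  shows "(\<delta> + 1) * (a * b - 1) / ((a + 1) * (b + 1)) \<le> (\<delta> + 1) * t / (t + 1)"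
proof -
  have "a * b \<le> t * b" "0 \<le> t * b" "0 \<le> a * t"
    using assms by (simp_all add: mult_right_mono)
  moreover have "t * ((a + 1) * (b + 1)) - (a * b - 1) * (t + 1) = a * t + t * b + 2 * t + 1 - a * b"
    by (simp add: algebra_simps)
  ultimately have cross: "(a * b - 1) * (t + 1) \<le> t * ((a + 1) * (b + 1))"
    using assms by linarith
  have "0 < (a + 1) * (b + 1)" "0 < t + 1" using assms by auto
  with cross have frac: "(a * b - 1) / ((a + 1) * (b + 1)) \<le> t / (t + 1)"
    by (simp add: divide_simps)
  show ?thesis
    using mult_left_mono[OF frac assms(1)] by (simp only: times_divide_eq_right)
qed

lemma high_weight_le:
  fixes \<delta> a b t :: real
  assumes "1 \<le> \<delta>" "1 < b" "0 \<le> a" "a \<le> t"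
  shows "(b - \<delta>) / (b - 1) + (\<delta> * a - 1) / (a + 1) \<le> (\<delta> + 1) * t / (t + 1)"
proof -
  have "(b - \<delta>) / (b - 1) \<le> 1"
    using assms(1,2) by simp
  moreover have "(\<delta> * a - 1) / (a + 1) = \<delta> - (\<delta> + 1) / (a + 1)"
    and "(\<delta> + 1) * t / (t + 1) = 1 + \<delta> - (\<delta> + 1) / (t + 1)"
    using assms(3,4) by (simp_all add: field_simps)
  moreover have "(\<delta> + 1) / (t + 1) \<le> (\<delta> + 1) / (a + 1)"
    using assms by (intro divide_left_mono) auto
  ultimately show ?thesis by linarith
qed

locale increasing_thresholds =
  fixes tau :: "nat \<Rightarrow> real" and m :: nat
  assumes m_ge_1: "1 \<le> m"
    and tau_1_ge_1: "1 \<le> tau 1"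
    and tau_strict_mono: "\<And>i j. 1 \<le> i \<Longrightarrow> i < j \<Longrightarrow> j \<le> m \<Longrightarrow> tau i < tau j"
begin

lemma tau_mono: "1 \<le> i \<Longrightarrow> i \<le> j \<Longrightarrow> j \<le> m \<Longrightarrow> tau i \<le> tau j"
  using tau_strict_mono[of i j] by (cases "i = j") auto

lemma tau_ge_1: "1 \<le> i \<Longrightarrow> i \<le> m \<Longrightarrow> 1 \<le> tau i"
  using tau_mono[of 1 i] tau_1_ge_1 by simp

lemma thr_pos: "l \<le> m \<Longrightarrow> 0 < thr tau l"
  using tau_ge_1[of l] tau_1_ge_1 by (auto simp: thr_def)

lemma thr_le_tau_top: "l \<le> m \<Longrightarrow> thr tau l \<le> tau m"
  using tau_mono[of l m] tau_ge_1[of m] tau_1_ge_1 m_ge_1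
  by (auto simp: thr_def intro: order_trans[of _ 1])

lemma thr_mult_thr_Suc_ge_1: "l < m \<Longrightarrow> 1 \<le> thr tau l * thr tau (Suc l)"
  using tau_1_ge_1 tau_ge_1[of l] tau_ge_1[of "Suc l"]
  by (cases "l = 0") (auto simp: thr_def intro: order_trans[OF _ mult_mono, of _ 1 1])

lemma tau_1_le_wmr_delta: "tau 1 \<le> wmr_delta tau m"
proof -
  have "delta_term tau m 0 = tau 1"
    using m_ge_1 tau_1_ge_1 by (simp add: delta_term_def thr_def field_simps)
  moreover have "delta_term tau m 0 \<le> wmr_delta tau m"
    unfolding wmr_delta_def by (intro Max_ge) auto
  ultimately show ?thesis by simp
qed

lemma wmr_delta_ge_1: "1 \<le> wmr_delta tau m"
  using tau_1_le_wmr_delta tau_1_ge_1 by simp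

lemma wmr_k_spec:
  "wmr_k tau m \<in> {1..m} \<and> tau (wmr_k tau m) \<le> wmr_delta tau m
     \<and> (wmr_k tau m = m \<or> wmr_delta tau m < tau (Suc (wmr_k tau m)))"
proof -
  have "\<exists>!k. k \<in> {1..m} \<and> tau k \<le> wmr_delta tau m
          \<and> (k = m \<or> wmr_delta tau m < tau (Suc k))"
    using m_ge_1 tau_strict_mono tau_1_le_wmr_delta by (rule unique_threshold_index)
  then show ?thesis unfolding wmr_k_def by (rule theI')
qed

lemma wmr_delta_less_tau_above_k:
  assumes "wmr_k tau m \<le> l" "l < m"
  shows "wmr_delta tau m < tau (Suc l)"
proof -
  have "wmr_delta tau m < tau (Suc (wmr_k tau m))"
    using wmr_k_spec assms by auto
  also have "\<dots> \<le> tau (Suc l)"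
    using assms by (intro tau_mono) auto
  finally show ?thesis .
qed

lemma wmr_weight_top: "wmr_weight tau m m = (wmr_delta tau m + 1) * tau m / (tau m + 1)"
  using wmr_k_spec tau_ge_1[of m] m_ge_1
  by (auto simp: wmr_weight_def Let_def thr_def field_simps)

lemma wmr_weight_top_pos: "0 < wmr_weight tau m m"
  using wmr_weight_top wmr_delta_ge_1 tau_ge_1[of m] m_ge_1 by simp

lemma wmr_weight_below_k:
  assumes "l < wmr_k tau m"
  shows "wmr_weight tau m l = (wmr_delta tau m + 1) * (thr tau l * tau (Suc l) - 1)
                              / ((thr tau l + 1) * (tau (Suc l) + 1))"
  using assms by (simp add: wmr_weight_def Let_def thr_def)

lemma wmr_weight_from_k:
  assumes "wmr_k tau m \<le> l" "l < m"
  shows "wmr_weight tau m l = (tau (Suc l) - wmr_delta tau m) / (tau (Suc l) - 1)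
                              + (wmr_delta tau m * tau l - 1) / (tau l + 1)"
  using assms wmr_k_spec by (simp add: wmr_weight_def Let_def thr_def)

lemma wmr_weight_nonneg:
  assumes "l \<le> m"
  shows "0 \<le> wmr_weight tau m l"
proof (cases "l < wmr_k tau m")
  case True
  then have "Suc l \<le> m" using wmr_k_spec by auto
  then have "1 \<le> thr tau l * tau (Suc l)" "0 < thr tau l" "0 < tau (Suc l)"
    using thr_mult_thr_Suc_ge_1[of l] thr_pos[of l] thr_pos[of "Suc l"] by (auto simp: thr_def)
  then show ?thesis
    using wmr_delta_ge_1 by (simp add: wmr_weight_below_k[OF True])
next
  case False
  then have "1 \<le> tau l" using assms wmr_k_spec tau_ge_1[of l] by auto
  then have "1 \<le> wmr_delta tau m * tau l"
    using mult_mono[of 1 "wmr_delta tau m" 1 "tau l"] wmr_delta_ge_1 by simp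
  then have "0 \<le> (wmr_delta tau m * tau l - 1) / (tau l + 1)"
    using \<open>1 \<le> tau l\<close> by simp
  moreover have "wmr_delta tau m < tau (Suc l)" if "l < m"
    using wmr_delta_less_tau_above_k[of l] False that by simp
  ultimately show ?thesis
    using False assms wmr_delta_ge_1 wmr_weight_from_k[of l] wmr_weight_top_pos
    by (cases "l = m") auto
qed

lemma wmr_weight_le_top:
  assumes "l \<le> m"
  shows "wmr_weight tau m l \<le> wmr_weight tau m m"
proof (cases "l < wmr_k tau m")
  case True
  then have "Suc l \<le> m" using wmr_k_spec by auto
  then show ?thesis
    unfolding wmr_weight_below_k[OF True] wmr_weight_top
    using wmr_delta_ge_1 thr_pos[of l] thr_le_tau_top[of l] tau_ge_1[of "Suc l"]
    by (intro low_weight_le) auto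
next
  case False
  then have k_le: "wmr_k tau m \<le> l" by simp
  show ?thesis
  proof (cases "l = m")
    case False
    then have "l < m" using assms by simp
    then have "1 < tau (Suc l)"
      using wmr_delta_less_tau_above_k[OF k_le] wmr_delta_ge_1 by simp
    moreover have "1 \<le> tau l" "tau l \<le> tau m"
      using k_le \<open>l < m\<close> wmr_k_spec tau_ge_1[of l] tau_mono[of l m] by auto
    ultimately show ?thesis
      unfolding wmr_weight_from_k[OF k_le \<open>l < m\<close>] wmr_weight_top
      using wmr_delta_ge_1 by (intro high_weight_le) auto
  qed simp
qed

lemma setA_disjoint:
  assumes "l < l'" "l' \<le> m"
  shows "setA tau m N loc X Y l \<inter> setA tau m N loc X Y l' = {}"
proof -
  have "thr tau (Suc l) \<le> thr tau l'"
    using assms tau_mono[of "Suc l" l'] by (simp add: thr_def)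
  moreover have "l \<noteq> m" using assms by simp
  ultimately have "False" if "i \<in> setA tau m N loc X Y l" "i \<in> setA tau m N loc X Y l'" for i
    using that mult_right_mono[of "thr tau (Suc l)" "thr tau l'" "dist (loc i) X"]
    by (simp add: setA_def in_band_def)
  then show ?thesis by blast
qed

lemma sum_card_setA_le:
  assumes "finite N"
  shows "(\<Sum>l\<in>{0..m}. card (setA tau m N loc P Q l)) \<le> card {i \<in> N. dist (loc i) P \<le> dist (loc i) Q}"
proof -
  have "(\<Sum>l\<in>{0..m}. card (setA tau m N loc P Q l)) = card (\<Union>l\<in>{0..m}. setA tau m N loc P Q l)"
  proof (rule card_UN_disjoint[symmetric])
    show "\<forall>l\<in>{0..m}. \<forall>l'\<in>{0..m}. l \<noteq> l' \<longrightarrow> setA tau m N loc P Q l \<inter> setA tau m N loc P Q l' = {}"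
    proof (intro ballI impI)
      fix l l' assume "l \<in> {0..m}" "l' \<in> {0..m}" "l \<noteq> l'"
      then show "setA tau m N loc P Q l \<inter> setA tau m N loc P Q l' = {}"
        using setA_disjoint[of l l'] setA_disjoint[of l' l] by (cases "l < l'") (simp_all add: Int_commute)
    qed
  qed (use assms in \<open>auto simp: setA_def\<close>)
  also have "\<dots> \<le> card {i \<in> N. dist (loc i) P \<le> dist (loc i) Q}"
    using assms by (intro card_mono) (auto simp: setA_def in_band_def)
  finally show ?thesis .
qed

lemma setA_top: "setA tau m N loc X Y m = {i \<in> N. tau m * dist (loc i) X \<le> dist (loc i) Y}"
proof -
  have X_le: "dist (loc i) X \<le> tau m * dist (loc i) X" for i
    using tau_ge_1[OF m_ge_1 order_refl] by (simp add: mult_le_cancel_right1)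
  have "thr tau m = tau m" using m_ge_1 by (simp add: thr_def)
  then show ?thesis
    unfolding setA_def in_band_def by (auto intro: order_trans[OF X_le])
qed

lemma wmr4_beats_card_le:
  assumes "finite N" "wmr4_beats tau m N loc P Q"
  shows "card {i \<in> N. tau m * dist (loc i) Q \<le> dist (loc i) P}
           \<le> card {i \<in> N. dist (loc i) P \<le> dist (loc i) Q}"
proof -
  have "real (card (setA tau m N loc Q P m)) \<le> (\<Sum>l\<in>{0..m}. real (card (setA tau m N loc P Q l)))"
  proof (rule weighted_top_count_le_total[where w = "wmr_weight tau m"
      and a = "\<lambda>l. real (card (setA tau m N loc P Q l))" and b = "\<lambda>l. real (card (setA tau m N loc Q P l))"])
    show "(\<Sum>l\<in>{0..m}. wmr_weight tau m l * real (card (setA tau m N loc Q P l)))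
        \<le> (\<Sum>l\<in>{0..m}. wmr_weight tau m l * real (card (setA tau m N loc P Q l)))"
      using assms(2) by (simp add: wmr4_beats_def)
  qed (simp_all add: wmr_weight_nonneg wmr_weight_le_top wmr_weight_top_pos)
  also have "\<dots> \<le> card {i \<in> N. dist (loc i) P \<le> dist (loc i) Q}"
    using sum_card_setA_le[OF assms(1)] by (simp flip: of_nat_sum)
  finally show ?thesis by (simp add: setA_top)
qed

end

theorem mainTheorem19:
  fixes tau :: "nat \<Rightarrow> real" and m :: nat
    and N :: "'v set" and loc :: "'v \<Rightarrow> 'a::metric_space"
    and P Q Zs :: 'a
  assumes "finite N"
    and "m \<ge> 1"
    and "1 \<le> tau 1"
    and "\<And>i j. 1 \<le> i \<Longrightarrow> i < j \<Longrightarrow> j \<le> m \<Longrightarrow> tau i < tau j"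
    and "\<And>Y. SC N loc Zs \<le> SC N loc Y"
    and "wmr4_beats tau m N loc P Q"
    and "SC N loc P / SC N loc Q > tau m"
  shows "SC N loc P / SC N loc Zs
           \<le> 2 * (SC N loc P / SC N loc Q) / (SC N loc P / SC N loc Q - tau m)"
proof -
  interpret increasing_thresholds tau m
    using assms(2-4) by unfold_locales
  have "1 \<le> tau m" using tau_ge_1 assms(2) by simp
  have "SC N loc P - tau m * SC N loc Q \<le> 2 * SC N loc Zs"
    using assms(1) \<open>1 \<le> tau m\<close> wmr4_beats_card_le[OF assms(1,6)]
    by (rule SC_sub_mult_le_twice_SC)
  then show ?thesis
    using \<open>1 \<le> tau m\<close> assms(7)
    by (intro ratio_le_of_sub_mult_le) (auto simp: SC_def sum_nonneg)
qed

end
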